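(* Let $\mathcal{C}$ be a concept class over $\{\pm1\}^n$, $\mathcal{D}$ a class of distributions over $\{\pm1\}^n$ closed under restrictions, $D^\star$ a distribution that has a depth-$d$ decomposition into distributions in $\mathcal{D}$, and $A$ a base learner using $m$ samples that learns $\mathcal{C}$ to expected error $\le \varepsilon$ under any distribution $D \in \mathcal{D}$. Then for any $f \in \mathcal{C}$ and \[ m_{\mathrm{train}} := O\left(\frac{2^d m}{\varepsilon}\right), \qquad m_{\mathrm{test}} := O\left(\frac{2^d \ln n}{\varepsilon^2}\right), \] if $S_{\mathrm{train}}$ and $S_{\mathrm{test}}$ consist of $m_{\mathrm{train}}$ and $m_{\mathrm{test}}$ i.i.d. examples from $D^\star_f$ respectively, then $\mathrm{TreeLearn}_A(S_{\mathrm{train}}, S_{\mathrm{test}}, d)$ returns a hypothesis $H$ satisfying $\mathbb{E}[\mathrm{error}(H, D^\star_f)] \le 4\varepsilon$.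
   Context: A restriction is $\rho \in \{\pm1,\star\}^n$; $x\in\rho$ means $x_i=\rho_i$ or $\rho_i=\star$ for all $i$; depth of $\rho$ = number of non-$\star$ coordinates. $D_\rho$ is $D$ conditioned on $x\in\rho$; for a labeled set $S$, $S_\rho=\{(x,y)\in S: x\in\rho\}$. $\mathcal{D}$ is closed under restrictions if $D\in\mathcal{D}$ implies $D_\rho\in\mathcal{D}$ for all $\rho$. $D_f$ is the distribution of $(x,f(x))$, $x\sim D$. $\mathrm{error}(h,P)=\Pr_{(x,y)\sim P}[h(x)\ne y]$ and $\mathrm{error}(h,S)$ is the fraction of $(x,y)\in S$ with $h(x)\neq y$. $A$ learns $\mathcal{C}$ to expected error $\varepsilon$ under $D$ using $m$ samples if for all $f\in\mathcal{C}$, given $m$ i.i.d. samples from $D_f$, its output $h$ has $\mathbb{E}[\mathrm{error}(h,D_f)]\le\varepsilon$. A depth-$d$ decision tree is a set of $2^d$ leaf restrictions defined recursively: depth $0$ is the single all-$\star$ restriction; depth $d\ge1$ has a root coordinate $i$ and two depth-$(d-1)$ trees not fixing $i$, whose leaves get coordinate $i$ set to $-1$ and $+1$ respectively. $D^\star$ has a depth-$d$ decomposition into $\mathcal{D}$ if some depth-$d$ tree $T$ has $(D^\star)_\ell\in\mathcal{D}$ for every leaf $\ell$. For a tree $T$ and map $\mathcal{H}$ from restrictions to hypotheses, $T\circ\mathcal{H}(x)=\mathcal{H}(\ell)(x)$ for the leaf $\ell\ni x$. Algorithm $\mathrm{TreeLearn}_A(S_{\mathrm{train}},S_{\mathrm{test}},d)$: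 for every depth-$d$ restriction $\rho$ set $h_\rho\leftarrow A((S_{\mathrm{train}})_\rho)$ (i.e., $A$ is run on whatever examples of $S_{\mathrm{train}}$ lie in $\rho$), let $\mathcal{H}(\rho)=h_\rho$, then find a depth-$d$ decision tree $T$ minimizing $\mathrm{error}(T\circ\mathcal{H},S_{\mathrm{test}})$ and return $T\circ\mathcal{H}$. Expectations are over the samples and the randomness of $A$. *)

theory Defs
  imports "HOL-Probability.Probability"
begin

text \<open>Points of the cube: bool lists of length n (True = +1, False = -1).
  Labels: bool (True = +1). Restrictions: bool option lists of length n
  (None = star).\<close>

type_synonym point = "bool list"
type_synonym restr = "bool option list"
type_synonym hyp = "point \<Rightarrow> bool"
type_synonym sample = "(point \<times> bool) list"

definition cube :: "nat \<Rightarrow> point set" where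
  "cube n = {x. length x = n}"

definition restrs :: "nat \<Rightarrow> restr set" where
  "restrs n = {\<rho>. length \<rho> = n}"

definition in_restr :: "point \<Rightarrow> restr \<Rightarrow> bool" where
  "in_restr x \<rho> \<longleftrightarrow> list_all2 (\<lambda>a r. r = None \<or> r = Some a) x \<rho>"

definition restr_set :: "restr \<Rightarrow> point set" where
  "restr_set \<rho> = {x. in_restr x \<rho>}"

definition restr_depth :: "restr \<Rightarrow> nat" where
  "restr_depth \<rho> = length (filter (\<lambda>r. r \<noteq> None) \<rho>)"

definition depth_restrs :: "nat \<Rightarrow> nat \<Rightarrow> restr set" where
  "depth_restrs n d = {\<rho> \<in> restrs n. restr_depth \<rho> = d}"

text \<open>D conditioned on x in rho (defined when rho has positive mass).\<close>
definition restrict_dist :: "point pmf \<Rightarrow> restr \<Rightarrow> point pmf" where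
  "restrict_dist D \<rho> = cond_pmf D (restr_set \<rho>)"

definition restrict_sample :: "restr \<Rightarrow> sample \<Rightarrow> sample" where
  "restrict_sample \<rho> S = filter (\<lambda>(x, y). in_restr x \<rho>) S"

definition closed_under_restrictions :: "nat \<Rightarrow> point pmf set \<Rightarrow> bool" where
  "closed_under_restrictions n \<D> \<longleftrightarrow>
     (\<forall>D\<in>\<D>. \<forall>\<rho>\<in>restrs n. set_pmf D \<inter> restr_set \<rho> \<noteq> {} \<longrightarrow> restrict_dist D \<rho> \<in> \<D>)"

text \<open>Depth-d decision trees over n coordinates, as sets of leaf restrictions.\<close>
inductive dtree :: "nat \<Rightarrow> nat \<Rightarrow> restr set \<Rightarrow> bool" for n :: nat where
  leaf: "dtree n 0 {replicate n None}"
| node: "\<lbrakk> i < n; dtree n d T0; dtree n d T1; \<forall>\<rho>\<in>T0 \<union> T1. \<rho> ! i = None \<rbrakk> \<Longrightarrow>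
     dtree n (Suc d) ((\<lambda>\<rho>. \<rho>[i := Some False]) ` T0 \<union> (\<lambda>\<rho>. \<rho>[i := Some True]) ` T1)"

definition has_decomposition :: "nat \<Rightarrow> point pmf set \<Rightarrow> point pmf \<Rightarrow> nat \<Rightarrow> bool" where
  "has_decomposition n \<D> Dstar d \<longleftrightarrow>
     (\<exists>T. dtree n d T \<and>
        (\<forall>l\<in>T. set_pmf Dstar \<inter> restr_set l \<noteq> {} \<longrightarrow> restrict_dist Dstar l \<in> \<D>))"

definition labeled :: "point pmf \<Rightarrow> hyp \<Rightarrow> (point \<times> bool) pmf" where
  "labeled D f = map_pmf (\<lambda>x. (x, f x)) D"

definition error :: "hyp \<Rightarrow> (point \<times> bool) pmf \<Rightarrow> real" where
  "error h P = measure_pmf.prob P {(x, y). h x \<noteq> y}"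

definition sample_error :: "hyp \<Rightarrow> sample \<Rightarrow> real" where
  "sample_error h S = real (length (filter (\<lambda>(x, y). h x \<noteq> y) S)) / real (length S)"

type_synonym learner = "sample \<Rightarrow> hyp pmf"

definition uses_samples :: "learner \<Rightarrow> nat \<Rightarrow> bool" where
  "uses_samples A m \<longleftrightarrow> (\<forall>S. m \<le> length S \<longrightarrow> A S = A (take m S))"

definition learns :: "hyp set \<Rightarrow> point pmf \<Rightarrow> learner \<Rightarrow> nat \<Rightarrow> real \<Rightarrow> bool" where
  "learns C D A m \<epsilon> \<longleftrightarrow>
     (\<forall>f\<in>C. measure_pmf.expectation (replicate_pmf m (labeled D f) \<bind> A)
                (\<lambda>h. error h (labeled D f)) \<le> \<epsilon>)"

definition tree_eval :: "restr set \<Rightarrow> (restr \<Rightarrow> hyp) \<Rightarrow> hyp" where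
  "tree_eval T H x = H (THE l. l \<in> T \<and> in_restr x l) x"

definition best_tree :: "nat \<Rightarrow> nat \<Rightarrow> (restr \<Rightarrow> hyp) \<Rightarrow> sample \<Rightarrow> restr set" where
  "best_tree n d H S = (SOME T. dtree n d T \<and>
     (\<forall>T'. dtree n d T' \<longrightarrow> sample_error (tree_eval T H) S \<le> sample_error (tree_eval T' H) S))"

definition tree_learn :: "nat \<Rightarrow> learner \<Rightarrow> sample \<Rightarrow> sample \<Rightarrow> nat \<Rightarrow> hyp pmf" where
  "tree_learn n A Strain Stest d =
     Pi_pmf (depth_restrs n d) (\<lambda>_. False) (\<lambda>\<rho>. A (restrict_sample \<rho> Strain)) \<bind>
       (\<lambda>H. return_pmf (tree_eval (best_tree n d H Stest) H))"

end

(*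
  Fix a depth-d tree T whose leaves split D* into distributions of the class. The leaves of T
  partition the cube, so the error of T composed with the leaf hypotheses H is the sum over the
  leaves l of Pr[x in l and H l x ~= f x]. Given their number k ~ Bin(m_train, p_l), the training
  examples that fall into l are i.i.d. from the restriction of D* to l, so the base learner errs
  with probability at most eps on l once k >= m. The identity
  p * Pr[Bin(N, p) = j] = (j + 1) / (N + 1) * Pr[Bin(N + 1, p) = j + 1] gives
  p_l * Pr[k < m] <= m / (N + 1), and summing over the at most 2^d leaves shows that T has expected
  error at most 2 eps. Selecting the tree by its test error costs at most one more eps: for a finite
  class I of [0,1]-valued losses, Hoeffding's lemma and Jensen's inequality bound the expected gap
  between true and empirical loss of any data-dependent choice from I on samples of size k by
  ln |I| / (lambda k) + lambda / 8 for every lambda > 0, and there are at most n^(2^d) trees of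
  depth d.
*)

theory Submission
  imports Defs "HOL-Probability.Hoeffding"
begin

section \<open>Restrictions and decision trees\<close>

lemma in_restr_conv_nth:
  "in_restr x \<rho> \<longleftrightarrow> length x = length \<rho> \<and> (\<forall>j<length \<rho>. \<rho>!j = None \<or> \<rho>!j = Some (x!j))"
  unfolding in_restr_def list_all2_conv_all_nth by auto

lemma length_in_restr: "in_restr x \<rho> \<Longrightarrow> length x = length \<rho>"
  by (simp add: in_restr_def list_all2_lengthD)

lemma in_restr_update:
  assumes "i < length \<rho>" "\<rho>!i = None"
  shows "in_restr x (\<rho>[i := Some b]) \<longleftrightarrow> in_restr x \<rho> \<and> x!i = b"
  using assms unfolding in_restr_conv_nth by (auto simp: nth_list_update split: if_splits)

lemma restr_depth_update:
  assumes "i < length \<rho>" "\<rho>!i = None"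
  shows "restr_depth (\<rho>[i := Some b]) = Suc (restr_depth \<rho>)"
  using assms unfolding restr_depth_def
proof (induction \<rho> arbitrary: i)
  case (Cons r \<rho>)
  then show ?case by (cases i) auto
qed simp

lemma finite_depth_restrs: "finite (depth_restrs n d)"
proof (rule finite_subset)
  show "depth_restrs n d \<subseteq> {xs. set xs \<subseteq> UNIV \<and> length xs = n}"
    by (auto simp: depth_restrs_def restrs_def)
  show "finite {xs :: restr. set xs \<subseteq> UNIV \<and> length xs = n}"
    by (rule finite_lists_length_eq) simp
qed

lemma dtree_leaves_depth_restrs: "dtree n d T \<Longrightarrow> T \<subseteq> depth_restrs n d"
proof (induction d T rule: dtree.induct)
  case leaf
  then show ?case by (simp add: depth_restrs_def restrs_def restr_depth_def)
next
  case (node i d T0 T1)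
  then have "length \<rho> = n" "restr_depth (\<rho>[i := Some b]) = Suc d" if "\<rho> \<in> T0 \<union> T1" for \<rho> b
    using that by (auto simp: depth_restrs_def restrs_def restr_depth_update)
  then show ?case by (auto simp: depth_restrs_def restrs_def)
qed

lemma dtree_finite_leaves: "dtree n d T \<Longrightarrow> finite T"
  using dtree_leaves_depth_restrs finite_depth_restrs by (rule finite_subset)

lemma dtree_leaf_length: "dtree n d T \<Longrightarrow> l \<in> T \<Longrightarrow> length l = n"
  using dtree_leaves_depth_restrs by (fastforce simp: depth_restrs_def restrs_def)

lemma dtree_card_leaves: "dtree n d T \<Longrightarrow> card T \<le> 2 ^ d"
proof (induction d T rule: dtree.induct)
  case (node i d T0 T1)
  have "card ((\<lambda>\<rho>. \<rho>[i := Some False]) ` T0 \<union> (\<lambda>\<rho>. \<rho>[i := Some True]) ` T1)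
        \<le> card ((\<lambda>\<rho>. \<rho>[i := Some False]) ` T0) + card ((\<lambda>\<rho>. \<rho>[i := Some True]) ` T1)"
    by (rule card_Un_le)
  also have "\<dots> \<le> card T0 + card T1"
    using node.hyps(2,3)[THEN dtree_finite_leaves] by (intro add_mono card_image_le)
  finally show ?case using node.IH by simp
qed simp

lemma dtree_unique_leaf:
  assumes "dtree n d T" "length x = n"
  shows "\<exists>!l. l \<in> T \<and> in_restr x l"
  using assms
proof (induction d T rule: dtree.induct)
  case leaf
  then show ?case by (auto simp: in_restr_conv_nth)
next
  case (node i d T0 T1)
  define Tx where "Tx = (if x!i then T1 else T0)"
  let ?upd = "\<lambda>\<rho>. \<rho>[i := Some (x!i)]"
  have len: "\<forall>\<rho>\<in>T0 \<union> T1. length \<rho> = n"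
    using node.hyps(2,3)[THEN dtree_leaf_length] by blast
  have leaves_of_x: "l \<in> (\<lambda>\<rho>. \<rho>[i := Some False]) ` T0 \<union> (\<lambda>\<rho>. \<rho>[i := Some True]) ` T1 \<and>
        in_restr x l \<longleftrightarrow> (\<exists>\<rho>\<in>Tx. in_restr x \<rho> \<and> l = ?upd \<rho>)" for l
    using node.hyps(1,4) len by (auto simp: Tx_def in_restr_update)
  have "\<exists>!\<rho>. \<rho> \<in> Tx \<and> in_restr x \<rho>"
    using node.IH node.prems by (simp add: Tx_def)
  then obtain \<sigma> where "\<sigma> \<in> Tx" "in_restr x \<sigma>" "\<And>\<rho>. \<rho> \<in> Tx \<Longrightarrow> in_restr x \<rho> \<Longrightarrow> \<rho> = \<sigma>"
    by blast
  then show ?case unfolding leaves_of_x by blast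
qed

lemma dtree_disjoint_leaves:
  assumes T: "dtree n d T"
  shows "disjoint_family_on restr_set T"
  unfolding disjoint_family_on_def
proof (intro ballI impI)
  fix l l' assume "l \<in> T" "l' \<in> T" "l \<noteq> l'"
  show "restr_set l \<inter> restr_set l' = {}"
  proof safe
    fix x assume "x \<in> restr_set l" "x \<in> restr_set l'"
    then have "in_restr x l" "in_restr x l'" "length x = n"
      using \<open>l \<in> T\<close> dtree_leaf_length[OF T] length_in_restr by (auto simp: restr_set_def)
    then show "x \<in> {}"
      using dtree_unique_leaf[OF T] \<open>l \<in> T\<close> \<open>l' \<in> T\<close> \<open>l \<noteq> l'\<close> by blast
  qed
qed

lemma tree_eval_leaf:
  assumes "dtree n d T" "l \<in> T" "in_restr x l"
  shows "tree_eval T H x = H l x"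
proof -
  have "length x = n"
    using assms dtree_leaf_length length_in_restr by metis
  then have "(THE l. l \<in> T \<and> in_restr x l) = l"
    using assms dtree_unique_leaf by blast
  then show ?thesis by (simp add: tree_eval_def)
qed

lemma dtrees_0: "{T. dtree n 0 T} = {{replicate n None}}"
  by (auto elim: dtree.cases intro: dtree.intros)

lemma dtrees_Suc_subset:
  "{T. dtree n (Suc d) T} \<subseteq>
     (\<lambda>(i, T0, T1). (\<lambda>\<rho>. \<rho>[i := Some False]) ` T0 \<union> (\<lambda>\<rho>. \<rho>[i := Some True]) ` T1) `
       ({..<n} \<times> {T. dtree n d T} \<times> {T. dtree n d T})"
proof
  fix T assume "T \<in> {T. dtree n (Suc d) T}"
  then obtain i T0 T1 where "i < n" "dtree n d T0" "dtree n d T1"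
    "T = (\<lambda>\<rho>. \<rho>[i := Some False]) ` T0 \<union> (\<lambda>\<rho>. \<rho>[i := Some True]) ` T1"
    by (auto elim: dtree.cases)
  then show "T \<in> (\<lambda>(i, T0, T1). (\<lambda>\<rho>. \<rho>[i := Some False]) ` T0 \<union> (\<lambda>\<rho>. \<rho>[i := Some True]) ` T1) `
       ({..<n} \<times> {T. dtree n d T} \<times> {T. dtree n d T})"
    by (intro image_eqI[where x="(i, T0, T1)"]) auto
qed

lemma finite_dtrees: "finite {T. dtree n d T}"
proof (induction d)
  case 0
  then show ?case by (simp add: dtrees_0)
next
  case (Suc d)
  then show ?case by (intro finite_subset[OF dtrees_Suc_subset] finite_imageI) auto
qed

lemma card_dtrees_le: "card {T. dtree n d T} \<le> n ^ (2 ^ d - 1)"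
proof (induction d)
  case 0
  then show ?case by (simp add: dtrees_0)
next
  case (Suc d)
  have fin: "finite ({..<n} \<times> {T. dtree n d T} \<times> {T. dtree n d T})"
    by (simp add: finite_dtrees)
  have "card {T. dtree n (Suc d) T} \<le> card ({..<n} \<times> {T. dtree n d T} \<times> {T. dtree n d T})"
    using card_mono[OF finite_imageI[OF fin] dtrees_Suc_subset] card_image_le[OF fin]
    by (rule order_trans)
  also have "\<dots> = n * card {T. dtree n d T} ^ 2"
    by (simp add: card_cartesian_product power2_eq_square)
  also have "\<dots> \<le> n * (n ^ (2 ^ d - 1)) ^ 2"
    using Suc.IH by (intro mult_left_mono power_mono) auto
  also have "\<dots> = n ^ (2 ^ Suc d - 1)"
  proof -
    obtain k where "(2::nat) ^ d = Suc k"
      using not0_implies_Suc by fastforce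
    then have "(2::nat) ^ Suc d - 1 = 1 + (2 ^ d - 1) * 2"
      by simp
    then show ?thesis by (simp only: power_add power_mult) simp
  qed
  finally show ?case .
qed

lemma ln_card_dtrees_le: "ln (real (card {T. dtree n d T})) \<le> 2 ^ d * ln (real n)"
proof -
  have ln_n: "0 \<le> ln (real n)" by (cases n) auto
  show ?thesis
  proof (cases "card {T. dtree n d T} = 0")
    case False
    have "0 < n ^ (2 ^ d - 1)"
      using card_dtrees_le[of n d] False by linarith
    then have "ln (real (card {T. dtree n d T})) \<le> ln (real (n ^ (2 ^ d - 1)))"
      using card_dtrees_le[of n d] False by (subst ln_le_cancel_iff) auto
    also have "\<dots> = real (2 ^ d - 1) * ln (real n)"
      by (simp add: ln_realpow)
    also have "\<dots> \<le> 2 ^ d * ln (real n)"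
      using ln_n by (intro mult_right_mono) auto
    finally show ?thesis .
  qed (simp add: ln_n)
qed

lemma best_tree_minimal:
  assumes "dtree n d T"
  shows "dtree n d (best_tree n d H S)"
    and "dtree n d T' \<Longrightarrow>
      sample_error (tree_eval (best_tree n d H S) H) S \<le> sample_error (tree_eval T' H) S"
proof -
  obtain T0 where "is_arg_min (\<lambda>T. sample_error (tree_eval T H) S) (\<lambda>T. T \<in> {T. dtree n d T}) T0"
    using ex_is_arg_min_if_finite[OF finite_dtrees] assms by blast
  then have "\<exists>T0. dtree n d T0 \<and>
      (\<forall>T'. dtree n d T' \<longrightarrow> sample_error (tree_eval T0 H) S \<le> sample_error (tree_eval T' H) S)"
    by (auto simp: is_arg_min_linorder)
  then have "dtree n d (best_tree n d H S) \<and> (\<forall>T'. dtree n d T' \<longrightarrow>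
      sample_error (tree_eval (best_tree n d H S) H) S \<le> sample_error (tree_eval T' H) S)"
    unfolding best_tree_def by (rule someI_ex)
  then show "dtree n d (best_tree n d H S)"
    and "dtree n d T' \<Longrightarrow>
      sample_error (tree_eval (best_tree n d H S) H) S \<le> sample_error (tree_eval T' H) S"
    by auto
qed

lemma pmf_integrable_bounded:
  fixes h :: "'a \<Rightarrow> real"
  assumes "\<And>x. x \<in> set_pmf p \<Longrightarrow> \<bar>h x\<bar> \<le> B"
  shows "integrable (measure_pmf p) h"
  using assms
  by (intro measure_pmf.integrable_const_bound[where B=B]) (auto simp: AE_measure_pmf_iff)

lemma pmf_expectation_01:
  fixes h :: "'a \<Rightarrow> real"
  assumes "\<And>x. 0 \<le> h x \<and> h x \<le> 1"
  shows "0 \<le> measure_pmf.expectation p h" "measure_pmf.expectation p h \<le> 1"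
proof -
  have "measure_pmf.expectation p h \<le> measure_pmf.expectation p (\<lambda>_. 1)"
    using assms by (intro integral_mono pmf_integrable_bounded[where B=1]) (auto simp: abs_le_iff)
  then show "measure_pmf.expectation p h \<le> 1" by simp
  show "0 \<le> measure_pmf.expectation p h"
    using assms by (intro integral_nonneg_AE) auto
qed

lemma pmf_expectation_le_add_const:
  fixes f g :: "'a \<Rightarrow> real"
  assumes le: "\<And>x. f x \<le> g x + c"
    and f01: "\<And>x. 0 \<le> f x \<and> f x \<le> 1" and g01: "\<And>x. 0 \<le> g x \<and> g x \<le> 1"
  shows "measure_pmf.expectation p f \<le> measure_pmf.expectation p g + c"
proof -
  have int_f: "integrable (measure_pmf p) f"
    using f01 by (intro pmf_integrable_bounded[where B=1]) (auto simp: abs_le_iff)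
  have int_g: "integrable (measure_pmf p) g"
    using g01 by (intro pmf_integrable_bounded[where B=1]) (auto simp: abs_le_iff)
  have "measure_pmf.expectation p f \<le> measure_pmf.expectation p (\<lambda>x. g x + c)"
    using int_g by (intro integral_mono int_f le) simp
  also have "\<dots> = measure_pmf.expectation p g + c"
    using int_g by simp
  finally show ?thesis .
qed

lemma pmf_expectation_bind_bounded:
  fixes h :: "'b \<Rightarrow> real"
  assumes bound: "\<And>y. y \<in> set_pmf (p \<bind> f) \<Longrightarrow> \<bar>h y\<bar> \<le> B"
  shows "measure_pmf.expectation (p \<bind> f) h =
         measure_pmf.expectation p (\<lambda>x. measure_pmf.expectation (f x) h)"
proof -
  define h' where "h' y = (if y \<in> set_pmf (p \<bind> f) then h y else 0)" for y
  obtain y0 where "y0 \<in> set_pmf (p \<bind> f)" using set_pmf_not_empty[of "p \<bind> f"] by blast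
  then have "\<bar>h' y\<bar> \<le> B" for y
    using bound[of y] bound[of y0] by (auto simp: h'_def)
  then have "measure_pmf.expectation (p \<bind> f) h' =
      measure_pmf.expectation p (\<lambda>x. measure_pmf.expectation (f x) h')"
    unfolding measure_pmf_bind
    by (intro integral_bind[where K="count_space UNIV" and B=B and B'=1])
      (auto simp: measure_pmf_in_subprob_algebra)
  moreover have "measure_pmf.expectation (p \<bind> f) h = measure_pmf.expectation (p \<bind> f) h'"
    by (intro integral_cong_AE) (auto simp: AE_measure_pmf_iff h'_def)
  moreover have "measure_pmf.expectation p (\<lambda>x. measure_pmf.expectation (f x) h') =
      measure_pmf.expectation p (\<lambda>x. measure_pmf.expectation (f x) h)"
    by (intro integral_cong_AE) (auto simp: AE_measure_pmf_iff h'_def intro!: integral_cong_AE)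
  ultimately show ?thesis by simp
qed

lemma measure_cond_pmf:
  assumes "set_pmf p \<inter> s \<noteq> {}"
  shows "measure_pmf.prob (cond_pmf p s) B = measure_pmf.prob p (s \<inter> B) / measure_pmf.prob p s"
  unfolding cond_pmf.rep_eq[OF assms] using assms
  by (intro measure_uniform_measure)
     (auto simp: measure_pmf.emeasure_eq_measure measure_measure_pmf_not_zero)

lemma measure_pmf_prob_Int_superset:
  assumes "set_pmf p \<subseteq> B"
  shows "measure_pmf.prob p (A \<inter> B) = measure_pmf.prob p A"
proof -
  have "A \<inter> B \<inter> set_pmf p = A \<inter> set_pmf p" using assms by blast
  then show ?thesis by (metis measure_Int_set_pmf)
qed

lemma bind_pmf_resample_cond:
  assumes "set_pmf P \<inter> S \<noteq> {}"
  shows "P \<bind> (\<lambda>x. if x \<in> S then F x else G x) =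
         P \<bind> (\<lambda>x. if x \<in> S then cond_pmf P S \<bind> F else G x)"
proof -
  define C where "C x = cond_pmf P {y. (x \<in> S) = (y \<in> S)}" for x
  \<comment> \<open>\<open>P\<close> is the mixture of its conditionals on \<open>S\<close> and on \<open>- S\<close>.\<close>
  have resample: "P \<bind> K = P \<bind> (\<lambda>x. C x \<bind> K)" for K :: "_ \<Rightarrow> 'b pmf"
  proof -
    have "P \<bind> C = P"
      unfolding C_def by (rule bind_cond_pmf_cancel) auto
    then show ?thesis by (metis bind_assoc_pmf)
  qed
  have "C x \<bind> (\<lambda>y. if y \<in> S then F y else G y) =
        C x \<bind> (\<lambda>y. if y \<in> S then cond_pmf P S \<bind> F else G y)" if "x \<in> set_pmf P" for x
  proof (cases "x \<in> S")
    case True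
    then have C: "C x = cond_pmf P S" by (simp add: C_def)
    have "C x \<bind> (\<lambda>y. if y \<in> S then F y else G y) = cond_pmf P S \<bind> F"
      unfolding C by (intro bind_pmf_cong refl) (simp add: set_cond_pmf[OF assms])
    moreover have "C x \<bind> (\<lambda>y. if y \<in> S then cond_pmf P S \<bind> F else G y) =
        cond_pmf P S \<bind> (\<lambda>_. cond_pmf P S \<bind> F)"
      unfolding C by (intro bind_pmf_cong refl) (simp add: set_cond_pmf[OF assms])
    ultimately show ?thesis by (simp add: bind_pmf_const)
  next
    case False
    then have "C x = cond_pmf P (- S)" by (simp add: C_def Compl_eq)
    moreover have "set_pmf P \<inter> - S \<noteq> {}" using that False by blast
    ultimately have "set_pmf (C x) \<subseteq> - S" by simp
    then show ?thesis by (intro bind_pmf_cong refl) auto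
  qed
  then show ?thesis by (simp add: resample[of "\<lambda>x. if x \<in> S then F x else G x"]
      resample[of "\<lambda>x. if x \<in> S then cond_pmf P S \<bind> F else G x"] cong: bind_pmf_cong)
qed

lemma take_replicate_pmf:
  assumes "m \<le> k"
  shows "map_pmf (take m) (replicate_pmf k P) = replicate_pmf m P"
proof -
  have k: "k = m + (k - m)" using assms by simp
  have "map_pmf (take m) (replicate_pmf k P) =
        replicate_pmf m P \<bind> (\<lambda>xs. replicate_pmf (k - m) P \<bind> (\<lambda>ys. return_pmf (take m (xs @ ys))))"
    by (subst k, subst replicate_pmf_distrib) (simp add: map_bind_pmf)
  also have "\<dots> = replicate_pmf m P \<bind> return_pmf"
    by (intro bind_pmf_cong refl) (auto simp: set_replicate_pmf)
  finally show ?thesis by (simp add: bind_return_pmf')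
qed

lemma pmf_expectation_replicate_Suc:
  fixes F :: "'a list \<Rightarrow> real"
  assumes "\<And>xs. length xs = Suc k \<Longrightarrow> \<bar>F xs\<bar> \<le> B"
  shows "measure_pmf.expectation (replicate_pmf (Suc k) P) F =
         measure_pmf.expectation P
           (\<lambda>x. measure_pmf.expectation (replicate_pmf k P) (\<lambda>xs. F (x # xs)))"
proof -
  have "replicate_pmf (Suc k) P = P \<bind> (\<lambda>x. map_pmf ((#) x) (replicate_pmf k P))"
    by (simp add: map_pmf_def)
  moreover have "measure_pmf.expectation (P \<bind> (\<lambda>x. map_pmf ((#) x) (replicate_pmf k P))) F =
      measure_pmf.expectation P
        (\<lambda>x. measure_pmf.expectation (map_pmf ((#) x) (replicate_pmf k P)) F)"
    using assms by (intro pmf_expectation_bind_bounded[where B=B]) (auto simp: set_replicate_pmf)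
  ultimately show ?thesis by simp
qed

lemma abs_sum_list_map_le:
  fixes \<phi> :: "'a \<Rightarrow> real"
  assumes "\<And>z. z \<in> set xs \<Longrightarrow> \<bar>\<phi> z\<bar> \<le> B"
  shows "\<bar>sum_list (map \<phi> xs)\<bar> \<le> real (length xs) * B"
proof -
  have "\<bar>sum_list (map \<phi> xs)\<bar> \<le> sum_list (map (\<lambda>z. \<bar>\<phi> z\<bar>) xs)"
    using sum_list_abs[of "map \<phi> xs"] by (simp add: o_def)
  also have "\<dots> \<le> sum_list (map (\<lambda>_. B) xs)"
    using assms by (rule sum_list_mono)
  finally show ?thesis by (simp add: sum_list_triv)
qed

lemma expectation_sum_list_replicate_pmf:
  fixes \<phi> :: "'a \<Rightarrow> real"
  assumes bound: "\<And>z. \<bar>\<phi> z\<bar> \<le> B"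
  shows "measure_pmf.expectation (replicate_pmf k P) (\<lambda>xs. sum_list (map \<phi> xs)) =
         real k * measure_pmf.expectation P \<phi>"
proof (induction k)
  case (Suc k)
  have sum_bound: "\<bar>sum_list (map \<phi> xs)\<bar> \<le> real (length xs) * B" for xs
    using bound by (rule abs_sum_list_map_le)
  have int_\<phi>: "integrable (measure_pmf P) \<phi>"
    using bound by (rule pmf_integrable_bounded)
  have int_sum: "integrable (measure_pmf (replicate_pmf k P)) (\<lambda>xs. sum_list (map \<phi> xs))"
    using sum_bound
    by (intro pmf_integrable_bounded[where B="real k * B"]) (auto simp: set_replicate_pmf)
  have "measure_pmf.expectation (replicate_pmf (Suc k) P) (\<lambda>xs. sum_list (map \<phi> xs)) =
        measure_pmf.expectation P (\<lambda>x. measure_pmf.expectation (replicate_pmf k P)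
          (\<lambda>xs. \<phi> x + sum_list (map \<phi> xs)))"
    by (subst pmf_expectation_replicate_Suc[where B="real (Suc k) * B"]) (metis sum_bound, simp)
  also have "\<dots> = measure_pmf.expectation P (\<lambda>x. \<phi> x + real k * measure_pmf.expectation P \<phi>)"
    using int_sum Suc.IH by (simp add: Bochner_Integration.integral_add)
  also have "\<dots> = real (Suc k) * measure_pmf.expectation P \<phi>"
    using int_\<phi> by (simp add: Bochner_Integration.integral_add algebra_simps)
  finally show ?case .
qed simp

lemma expectation_prod_list_replicate_pmf:
  fixes \<phi> :: "'a \<Rightarrow> real"
  assumes bound: "\<And>z. 0 \<le> \<phi> z \<and> \<phi> z \<le> B"
  shows "measure_pmf.expectation (replicate_pmf k P) (\<lambda>xs. prod_list (map \<phi> xs)) =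
         measure_pmf.expectation P \<phi> ^ k"
proof (induction k)
  case (Suc k)
  have prod_bound: "\<bar>prod_list (map \<phi> xs)\<bar> \<le> B ^ length xs" for xs
  proof (induction xs)
    case (Cons a xs)
    have "\<bar>\<phi> a\<bar> \<le> B" "0 \<le> B" using bound[of a] by auto
    with Cons show ?case by (simp add: abs_mult mult_mono)
  qed simp
  have "measure_pmf.expectation (replicate_pmf (Suc k) P) (\<lambda>xs. prod_list (map \<phi> xs)) =
        measure_pmf.expectation P (\<lambda>x. \<phi> x * measure_pmf.expectation (replicate_pmf k P)
          (\<lambda>xs. prod_list (map \<phi> xs)))"
    by (subst pmf_expectation_replicate_Suc[where B="B ^ Suc k"]) (metis prod_bound, simp)
  then show ?case by (simp add: Suc.IH)
qed simp

section \<open>Filtered i.i.d. samples\<close>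

lemma map_pmf_mem_eq_bernoulli_pmf:
  "map_pmf (\<lambda>x. x \<in> S) P = bernoulli_pmf (measure_pmf.prob P S)"
proof (rule pmf_eqI)
  fix b
  have "pmf (map_pmf (\<lambda>x. x \<in> S) P) b = measure_pmf.prob P (if b then S else - S)"
    by (auto simp: pmf_map vimage_def Compl_eq)
  then show "pmf (map_pmf (\<lambda>x. x \<in> S) P) b = pmf (bernoulli_pmf (measure_pmf.prob P S)) b"
    by (simp add: measure_pmf.prob_compl[symmetric] Compl_eq_Diff_UNIV)
qed

lemma filter_replicate_pmf:
  assumes "set_pmf P \<inter> S \<noteq> {}"
  shows "map_pmf (filter (\<lambda>z. z \<in> S)) (replicate_pmf N P) =
         binomial_pmf N (measure_pmf.prob P S) \<bind> (\<lambda>k. replicate_pmf k (cond_pmf P S))"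
proof (induction N)
  case 0
  show ?case by (simp add: binomial_pmf_0 bind_return_pmf)
next
  case (Suc N)
  define p where "p = measure_pmf.prob P S"
  define F where "F = binomial_pmf N p \<bind> (\<lambda>k. replicate_pmf k (cond_pmf P S))"
  define G where "G = map_pmf (filter (\<lambda>z. z \<in> S)) (replicate_pmf N P)"
  have p: "p \<in> {0..1}" by (simp add: p_def)
  have "map_pmf (filter (\<lambda>z. z \<in> S)) (replicate_pmf (Suc N) P) =
        P \<bind> (\<lambda>x. if x \<in> S then map_pmf ((#) x) G else G)"
    by (auto simp: G_def map_pmf_def bind_assoc_pmf bind_return_pmf intro!: bind_pmf_cong)
  also have "G = F"
    unfolding G_def F_def p_def by (rule Suc.IH)
  also have "P \<bind> (\<lambda>x. if x \<in> S then map_pmf ((#) x) F else F) =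
             P \<bind> (\<lambda>x. if x \<in> S then cond_pmf P S \<bind> (\<lambda>x. map_pmf ((#) x) F) else F)"
    by (rule bind_pmf_resample_cond[OF assms])
  also have "cond_pmf P S \<bind> (\<lambda>x. map_pmf ((#) x) F) =
             binomial_pmf N p \<bind> (\<lambda>k. replicate_pmf (Suc k) (cond_pmf P S))"
    by (simp add: F_def map_bind_pmf map_pmf_def bind_assoc_pmf bind_return_pmf)
       (rule bind_commute_pmf)
  also have "P \<bind> (\<lambda>x. if x \<in> S then binomial_pmf N p \<bind> (\<lambda>k. replicate_pmf (Suc k) (cond_pmf P S))
                        else F) =
      map_pmf (\<lambda>x. x \<in> S) P \<bind> (\<lambda>b. binomial_pmf N p \<bind>
         (\<lambda>k. replicate_pmf ((if b then 1 else 0) + k) (cond_pmf P S)))"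
    by (simp add: bind_map_pmf F_def cong: if_cong) (intro bind_pmf_cong refl, auto)
  also have "\<dots> = binomial_pmf (Suc N) p \<bind> (\<lambda>k. replicate_pmf k (cond_pmf P S))"
    by (simp add: map_pmf_mem_eq_bernoulli_pmf binomial_pmf_Suc[OF p] bind_assoc_pmf
        bind_return_pmf flip: p_def)
  finally show ?case unfolding p_def .
qed

lemma binomial_pmf_lower_tail:
  assumes p: "p \<in> {0..1}"
  shows "p * measure_pmf.prob (binomial_pmf N p) {..<k} \<le> real k / real (Suc N)"
proof -
  let ?B = "\<lambda>N. pmf (binomial_pmf N p)"
  have shift: "p * ?B N j = real (Suc j) / real (Suc N) * ?B (Suc N) (Suc j)" for j
  proof -
    have "real (Suc j) * real (Suc N choose Suc j) = real (Suc N) * real (N choose j)"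
      by (simp only: of_nat_mult[symmetric] Suc_times_binomial)
    then show ?thesis using p by (simp add: field_simps del: binomial_Suc_Suc of_nat_Suc)
  qed
  have "p * measure_pmf.prob (binomial_pmf N p) {..<k} = (\<Sum>j<k. p * ?B N j)"
    by (simp add: measure_measure_pmf_finite sum_distrib_left)
  also have "\<dots> \<le> (\<Sum>j<k. real k / real (Suc N) * ?B (Suc N) (Suc j))"
    unfolding shift by (intro sum_mono mult_right_mono divide_right_mono) auto
  also have "\<dots> = real k / real (Suc N) * measure_pmf.prob (binomial_pmf (Suc N) p) (Suc ` {..<k})"
    by (simp add: measure_measure_pmf_finite sum_distrib_left sum.reindex)
  also have "\<dots> \<le> real k / real (Suc N)"
    by (intro mult_left_le) auto
  finally show ?thesis .
qed

lemma expectation_learner_filtered_sample: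
  fixes A :: "'a list \<Rightarrow> 'h pmf" and err :: "'h \<Rightarrow> real"
  assumes ne: "set_pmf P \<inter> S \<noteq> {}"
    and err01: "\<And>h. 0 \<le> err h \<and> err h \<le> 1"
    and uses: "\<And>xs. m \<le> length xs \<Longrightarrow> A xs = A (take m xs)"
    and learns: "measure_pmf.expectation (replicate_pmf m (cond_pmf P S) \<bind> A) err \<le> \<epsilon>"
  shows "measure_pmf.expectation (replicate_pmf N P)
           (\<lambda>xs. measure_pmf.expectation (A (filter (\<lambda>z. z \<in> S) xs)) err)
         \<le> \<epsilon> + measure_pmf.prob (binomial_pmf N (measure_pmf.prob P S)) {..<m}"
proof -
  define g where "g ys = measure_pmf.expectation (A ys) err" for ys
  define K where "K = binomial_pmf N (measure_pmf.prob P S)"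
  let ?E = "\<lambda>k. measure_pmf.expectation (replicate_pmf k (cond_pmf P S)) g"
  have g01: "0 \<le> g ys \<and> g ys \<le> 1" for ys
    unfolding g_def using pmf_expectation_01[OF err01] by auto
  have E01: "0 \<le> ?E k \<and> ?E k \<le> 1" for k
    using pmf_expectation_01[OF g01] by auto
  have "?E m = measure_pmf.expectation (replicate_pmf m (cond_pmf P S) \<bind> A) err"
    unfolding g_def using err01 by (intro pmf_expectation_bind_bounded[symmetric, where B=1]) auto
  with learns have learns': "?E m \<le> \<epsilon>" by simp
  have pointwise: "?E k \<le> \<epsilon> + indicator {..<m} k" for k
  proof (cases "k < m")
    case True
    then show ?thesis using E01[of k] E01[of m] learns' by simp
  next
    case False
    have "?E k = measure_pmf.expectation (replicate_pmf k (cond_pmf P S)) (\<lambda>xs. g (take m xs))"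
      using False by (intro integral_cong_AE)
        (auto simp: AE_measure_pmf_iff set_replicate_pmf g_def
          intro!: arg_cong[where f="\<lambda>q. measure_pmf.expectation q err"] uses)
    also have "\<dots> = ?E m"
      using False by (simp flip: take_replicate_pmf[of m k])
    finally show ?thesis using learns' False by simp
  qed
  have "measure_pmf.expectation (replicate_pmf N P) (\<lambda>xs. g (filter (\<lambda>z. z \<in> S) xs)) =
      measure_pmf.expectation (map_pmf (filter (\<lambda>z. z \<in> S)) (replicate_pmf N P)) g"
    by simp
  also have "\<dots> = measure_pmf.expectation K ?E"
    unfolding filter_replicate_pmf[OF ne] K_def using g01
    by (intro pmf_expectation_bind_bounded[where B=1]) (auto simp: abs_le_iff)
  also have "\<dots> \<le> measure_pmf.expectation K (\<lambda>k. \<epsilon> + indicator {..<m} k)"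
    using pointwise
    by (intro integral_mono integrable_measure_pmf_finite) (auto simp: K_def set_pmf_binomial_eq)
  also have "\<dots> = \<epsilon> + measure_pmf.prob K {..<m}"
    by (subst Bochner_Integration.integral_add)
      (auto simp: K_def set_pmf_binomial_eq intro!: integrable_measure_pmf_finite)
  finally show ?thesis by (simp add: g_def K_def)
qed

section \<open>Empirical risk minimisation over a finite class\<close>

lemma hoeffdings_lemma_pmf:
  fixes w :: "'a \<Rightarrow> real"
  assumes w01: "\<And>z. 0 \<le> w z \<and> w z \<le> 1" and l: "l > 0"
  shows "measure_pmf.expectation P (\<lambda>z. exp (l * (measure_pmf.expectation P w - w z)))
         \<le> exp (l\<^sup>2 / 8)"
proof -
  interpret interval_bounded_random_variable "measure_pmf P" "\<lambda>z. - w z" "-1" "0"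
    by unfold_locales (use w01 in \<open>auto simp: AE_measure_pmf_iff\<close>)
  have "nn_integral (measure_pmf P) (\<lambda>z. exp (l * (measure_pmf.expectation P w - w z)))
        \<le> ennreal (exp (l\<^sup>2 / 8))"
    using Hoeffdings_lemma_nn_integral[OF l] by (simp add: algebra_simps)
  moreover have "integrable (measure_pmf P) (\<lambda>z. exp (l * (measure_pmf.expectation P w - w z)))"
  proof (rule pmf_integrable_bounded[where B="exp l"])
    fix z
    have "measure_pmf.expectation P w \<le> 1" using w01 by (rule pmf_expectation_01)
    then have "l * (measure_pmf.expectation P w - w z) \<le> l * 1"
      using w01[of z] l by (intro mult_left_mono) auto
    then show "\<bar>exp (l * (measure_pmf.expectation P w - w z))\<bar> \<le> exp l" by simp
  qed
  ultimately show ?thesis by (simp add: nn_integral_eq_integral)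
qed

definition deviation :: "'a pmf \<Rightarrow> ('a \<Rightarrow> real) \<Rightarrow> 'a list \<Rightarrow> real" where
  "deviation P w S = sum_list (map (\<lambda>z. measure_pmf.expectation P w - w z) S)"

lemma deviation_eq:
  "deviation P w S = real (length S) * measure_pmf.expectation P w - sum_list (map w S)"
  by (simp add: deviation_def sum_list_subtractf sum_list_triv)

lemma abs_deviation_le:
  assumes "\<And>z. 0 \<le> w z \<and> w z \<le> 1"
  shows "\<bar>deviation P w S\<bar> \<le> real (length S)"
proof -
  have "0 \<le> measure_pmf.expectation P w" "measure_pmf.expectation P w \<le> 1"
    using assms by (rule pmf_expectation_01)+
  then have "\<bar>measure_pmf.expectation P w - w z\<bar> \<le> 1" for z
    using assms[of z] by (auto simp: abs_le_iff)
  then show ?thesis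
    using abs_sum_list_map_le[of S _ 1] by (simp add: deviation_def)
qed

lemma expectation_exp_deviation_replicate_pmf:
  fixes w :: "'a \<Rightarrow> real"
  assumes w01: "\<And>z. 0 \<le> w z \<and> w z \<le> 1" and l: "l > 0"
  shows "measure_pmf.expectation (replicate_pmf k P) (\<lambda>S. exp (l * deviation P w S))
         \<le> exp (l\<^sup>2 / 8) ^ k"
proof -
  let ?\<psi> = "\<lambda>z. exp (l * (measure_pmf.expectation P w - w z))"
  have exp_sum: "exp (l * deviation P w S) = prod_list (map ?\<psi> S)" for S
    by (induction S) (auto simp: deviation_def distrib_left exp_add)
  have bound: "0 \<le> ?\<psi> z \<and> ?\<psi> z \<le> exp l" for z
  proof -
    have "measure_pmf.expectation P w \<le> 1" using w01 by (rule pmf_expectation_01)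
    then have "l * (measure_pmf.expectation P w - w z) \<le> l * 1"
      using w01[of z] l by (intro mult_left_mono) auto
    then show ?thesis by simp
  qed
  have "measure_pmf.expectation (replicate_pmf k P) (\<lambda>S. exp (l * deviation P w S)) =
      measure_pmf.expectation P ?\<psi> ^ k"
    unfolding exp_sum by (rule expectation_prod_list_replicate_pmf[where B="exp l"]) (fact bound)
  also have "\<dots> \<le> exp (l\<^sup>2 / 8) ^ k"
    using hoeffdings_lemma_pmf[OF w01 l] by (intro power_mono integral_nonneg_AE) auto
  finally show ?thesis .
qed

lemma expectation_deviation_of_choice:
  fixes w :: "'t \<Rightarrow> 'a \<Rightarrow> real" and c :: "'a list \<Rightarrow> 't"
  assumes fin: "finite I" and c: "\<And>S. c S \<in> I"
    and w01: "\<And>t z. 0 \<le> w t z \<and> w t z \<le> 1" and l: "l > 0"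
  shows "measure_pmf.expectation (replicate_pmf k P) (\<lambda>S. deviation P (w (c S)) S)
         \<le> ln (real (card I)) / l + real k * l / 8"
proof -
  define R where "R = replicate_pmf k P"
  have bound: "\<bar>deviation P (w t) S\<bar> \<le> real k" if "S \<in> set_pmf R" for t S
    using abs_deviation_le[where w="w t" and P=P and S=S, OF w01] that
    by (simp add: R_def set_replicate_pmf)
  have exp_bound: "\<bar>exp (l * x)\<bar> \<le> exp (l * real k)" if "\<bar>x\<bar> \<le> real k" for x
    using that l by (auto intro: mult_left_mono)
  have int_c: "integrable R (\<lambda>S. deviation P (w (c S)) S)"
    using bound by (rule pmf_integrable_bounded)
  have int_exp_c: "integrable R (\<lambda>S. exp (l * deviation P (w (c S)) S))"
    using bound exp_bound by (intro pmf_integrable_bounded[where B="exp (l * real k)"]) auto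
  have int_exp: "integrable R (\<lambda>S. exp (l * deviation P (w t) S))" for t
    using bound exp_bound by (intro pmf_integrable_bounded[where B="exp (l * real k)"]) auto
  have "exp (measure_pmf.expectation R (\<lambda>S. l * deviation P (w (c S)) S)) \<le>
      measure_pmf.expectation R (\<lambda>S. exp (l * deviation P (w (c S)) S))"
    using measure_pmf.jensens_inequality[of R "\<lambda>S. l * deviation P (w (c S)) S" UNIV 0 0 exp]
      int_c int_exp_c convex_on_exp[of 1] by auto
  also have "\<dots> \<le> measure_pmf.expectation R (\<lambda>S. \<Sum>t\<in>I. exp (l * deviation P (w t) S))"
    using int_exp_c int_exp fin c
    by (intro integral_mono)
      (auto intro!: member_le_sum[where f="\<lambda>t. exp (l * deviation P (w t) _)"])
  also have "\<dots> = (\<Sum>t\<in>I. measure_pmf.expectation R (\<lambda>S. exp (l * deviation P (w t) S)))"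
    using int_exp by (rule Bochner_Integration.integral_sum)
  also have "\<dots> \<le> (\<Sum>t\<in>I. exp (l\<^sup>2 / 8) ^ k)"
    unfolding R_def using w01 l by (intro sum_mono expectation_exp_deviation_replicate_pmf) auto
  also have "\<dots> = exp (ln (real (card I)) + real k * l\<^sup>2 / 8)"
  proof -
    have "card I > 0" using fin c by (auto simp: card_gt_0_iff)
    then show ?thesis by (simp add: exp_add exp_of_nat_mult[symmetric] mult.commute)
  qed
  finally have "l * measure_pmf.expectation R (\<lambda>S. deviation P (w (c S)) S) \<le>
      ln (real (card I)) + real k * l\<^sup>2 / 8"
    by simp
  then show ?thesis
    using l unfolding R_def by (simp add: field_simps power2_eq_square)
qed

lemma erm_expected_risk:
  fixes w :: "'t \<Rightarrow> 'a \<Rightarrow> real" and erm :: "'a list \<Rightarrow> 't"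
  assumes fin: "finite I" and t: "t \<in> I"
    and w01: "\<And>t z. 0 \<le> w t z \<and> w t z \<le> 1" and k: "k > 0" and l: "l > 0"
    and erm_in: "\<And>S. erm S \<in> I"
    and erm_min: "\<And>S t'. length S = k \<Longrightarrow> t' \<in> I \<Longrightarrow>
                    sum_list (map (w (erm S)) S) \<le> sum_list (map (w t') S)"
  shows "measure_pmf.expectation (replicate_pmf k P) (\<lambda>S. measure_pmf.expectation P (w (erm S)))
         \<le> measure_pmf.expectation P (w t) + ln (real (card I)) / (l * real k) + l / 8"
proof -
  define R where "R = replicate_pmf k P"
  have len: "length S = k" if "S \<in> set_pmf R" for S
    using that by (simp add: R_def set_replicate_pmf)
  have "\<bar>deviation P (w t') S\<bar> \<le> real (length S)" for t' S
    by (rule abs_deviation_le) (rule w01)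
  then have int_dev: "integrable R (\<lambda>S. deviation P (w (erm S)) S)"
    using len by (intro pmf_integrable_bounded[where B="real k"]) auto
  have "\<bar>sum_list (map (w t) S)\<bar> \<le> real (length S) * 1" for S
    by (rule abs_sum_list_map_le) (use w01[of t] in \<open>auto simp: abs_le_iff\<close>)
  then have int_emp: "integrable R (\<lambda>S. sum_list (map (w t) S))"
    using len by (intro pmf_integrable_bounded[where B="real k"]) auto
  have "0 \<le> measure_pmf.expectation P (w t') \<and> measure_pmf.expectation P (w t') \<le> 1" for t'
    using pmf_expectation_01[of "w t'" P] w01 by blast
  then have int_risk: "integrable R (\<lambda>S. real k * measure_pmf.expectation P (w (erm S)))"
    by (intro pmf_integrable_bounded[where B="real k"]) (simp add: abs_mult mult_left_le)
  have "real k * measure_pmf.expectation P (w (erm S)) \<le>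
      deviation P (w (erm S)) S + sum_list (map (w t) S)" if "length S = k" for S
    using erm_min[OF that t] that by (simp add: deviation_eq)
  then have "measure_pmf.expectation R (\<lambda>S. real k * measure_pmf.expectation P (w (erm S))) \<le>
      measure_pmf.expectation R (\<lambda>S. deviation P (w (erm S)) S + sum_list (map (w t) S))"
    using int_risk int_dev int_emp len by (intro integral_mono_AE) (auto simp: AE_measure_pmf_iff)
  also have "\<dots> = measure_pmf.expectation R (\<lambda>S. deviation P (w (erm S)) S) +
      real k * measure_pmf.expectation P (w t)"
    using int_dev int_emp w01
    by (simp add: R_def expectation_sum_list_replicate_pmf[where B=1] abs_le_iff)
  also have "\<dots> \<le> ln (real (card I)) / l + real k * l / 8 + real k * measure_pmf.expectation P (w t)"
    unfolding R_def using expectation_deviation_of_choice[OF fin erm_in w01 l] by simp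
  finally show ?thesis
    using k l by (simp add: R_def field_simps)
qed

lemma error_eq_expectation:
  "error h P = measure_pmf.expectation P (\<lambda>z. of_bool (h (fst z) \<noteq> snd z))"
proof -
  have "(\<lambda>z. of_bool (h (fst z) \<noteq> snd z)) = (indicator {(x, y). h x \<noteq> y} :: _ \<Rightarrow> real)"
    by (auto simp: indicator_def)
  then show ?thesis by (simp add: error_def)
qed

lemma sample_error_eq_sum_list:
  "sample_error h S = sum_list (map (\<lambda>z. of_bool (h (fst z) \<noteq> snd z)) S) / real (length S)"
proof -
  have count: "real (length (filter Q xs)) = sum_list (map (\<lambda>z. of_bool (Q z)) xs)"
    for Q and xs :: "'a list"
    by (induction xs) auto
  have "(\<lambda>(x, y). h x \<noteq> y) = (\<lambda>z. h (fst z) \<noteq> snd z)" by auto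
  then show ?thesis by (simp only: sample_error_def count)
qed

lemma error_labeled: "error h (labeled D f) = measure_pmf.prob D {x. h x \<noteq> f x}"
  by (simp add: error_def labeled_def vimage_def)

lemma dtree_error_decomposition:
  assumes T: "dtree n d T" and supp: "set_pmf D \<subseteq> cube n"
  shows "measure_pmf.prob D {x. tree_eval T H x \<noteq> f x} =
         (\<Sum>l\<in>T. measure_pmf.prob D {x \<in> restr_set l. H l x \<noteq> f x})"
proof -
  have "{x. tree_eval T H x \<noteq> f x} \<inter> cube n = (\<Union>l\<in>T. {x \<in> restr_set l. H l x \<noteq> f x})"
  proof (intro equalityI subsetI)
    fix x assume x: "x \<in> {x. tree_eval T H x \<noteq> f x} \<inter> cube n"
    then have "\<exists>!l. l \<in> T \<and> in_restr x l"
      using dtree_unique_leaf[OF T] by (simp add: cube_def)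
    then obtain l where "l \<in> T" "in_restr x l"
      by blast
    then show "x \<in> (\<Union>l\<in>T. {x \<in> restr_set l. H l x \<noteq> f x})"
      using x tree_eval_leaf[OF T] by (auto simp: restr_set_def)
  next
    fix x assume "x \<in> (\<Union>l\<in>T. {x \<in> restr_set l. H l x \<noteq> f x})"
    then obtain l where "l \<in> T" "in_restr x l" "H l x \<noteq> f x"
      by (auto simp: restr_set_def)
    then show "x \<in> {x. tree_eval T H x \<noteq> f x} \<inter> cube n"
      using tree_eval_leaf[OF T] length_in_restr dtree_leaf_length[OF T] by (auto simp: cube_def)
  qed
  then have "measure_pmf.prob D {x. tree_eval T H x \<noteq> f x} =
      measure_pmf.prob D (\<Union>l\<in>T. {x \<in> restr_set l. H l x \<noteq> f x})"
    using measure_pmf_prob_Int_superset[OF supp, of "{x. tree_eval T H x \<noteq> f x}"] by simp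
  also have "\<dots> = (\<Sum>l\<in>T. measure_pmf.prob D {x \<in> restr_set l. H l x \<noteq> f x})"
    using dtree_disjoint_leaves[OF T] dtree_finite_leaves[OF T]
    by (intro measure_pmf.finite_measure_finite_Union) (auto simp: disjoint_family_on_def)
  finally show ?thesis .
qed

lemma dtree_sum_leaf_measure_le:
  assumes T: "dtree n d T"
  shows "(\<Sum>l\<in>T. measure_pmf.prob D (restr_set l)) \<le> 1"
proof -
  have "(\<Sum>l\<in>T. measure_pmf.prob D (restr_set l)) = measure_pmf.prob D (\<Union>l\<in>T. restr_set l)"
    using dtree_disjoint_leaves[OF T] dtree_finite_leaves[OF T]
    by (intro measure_pmf.finite_measure_finite_Union[symmetric]) auto
  then show ?thesis by simp
qed

section \<open>Analysis of TreeLearn\<close>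

lemma best_tree_expected_error:
  assumes T: "dtree n d T" and \<epsilon>: "\<epsilon> > 0"
    and mtest: "real mtest \<ge> 2 ^ d * ln (real n) / \<epsilon> ^ 2"
  shows "measure_pmf.expectation (replicate_pmf mtest P)
           (\<lambda>S. error (tree_eval (best_tree n d H S) H) P) \<le> error (tree_eval T H) P + \<epsilon>"
proof (cases "mtest = 0")
  case True
  \<comment> \<open>Then \<open>n \<le> 1\<close>, and \<open>T\<close> is the only tree of depth \<open>d\<close>.\<close>
  have "2 ^ d * ln (real n) / \<epsilon> ^ 2 \<le> 0"
    using mtest True by simp
  then have "ln (real (card {T. dtree n d T})) \<le> 0"
    using ln_card_dtrees_le[of n d] \<epsilon> by (simp add: divide_le_0_iff)
  then have "card {T. dtree n d T} \<le> Suc 0"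
    by (cases "card {T. dtree n d T} = 0") (auto simp: ln_le_zero_iff)
  then have "best_tree n d H S = T" for S
    using card_le_Suc0_iff_eq[OF finite_dtrees] best_tree_minimal(1)[OF T] T by blast
  then show ?thesis
    using \<epsilon> by simp
next
  case False
  let ?I = "{T. dtree n d T}"
  define w :: "restr set \<Rightarrow> point \<times> bool \<Rightarrow> real"
    where "w T z = of_bool (tree_eval T H (fst z) \<noteq> snd z)" for T z
  have "ln (real (card ?I)) \<le> real mtest * \<epsilon>\<^sup>2"
    using ln_card_dtrees_le[of n d] mtest \<epsilon> by (simp add: field_simps)
  then have ln_card: "ln (real (card ?I)) / (4 * \<epsilon> * real mtest) \<le> \<epsilon> / 4"
    using False \<epsilon> by (simp add: field_simps power2_eq_square)
  have "measure_pmf.expectation (replicate_pmf mtest P)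
          (\<lambda>S. measure_pmf.expectation P (w (best_tree n d H S)))
        \<le> measure_pmf.expectation P (w T) + ln (real (card ?I)) / (4 * \<epsilon> * real mtest) + 4 * \<epsilon> / 8"
  proof (rule erm_expected_risk)
    show "finite ?I" by (rule finite_dtrees)
    show "best_tree n d H S \<in> ?I" for S using best_tree_minimal(1)[OF T] by simp
    show "sum_list (map (w (best_tree n d H S)) S) \<le> sum_list (map (w T') S)"
      if "length S = mtest" "T' \<in> ?I" for S T'
      using best_tree_minimal(2)[OF T, of T' H S] that False unfolding w_def
      by (simp add: sample_error_eq_sum_list divide_le_cancel)
  qed (use T \<epsilon> False w_def in auto)
  then have "measure_pmf.expectation (replicate_pmf mtest P)
      (\<lambda>S. measure_pmf.expectation P (w (best_tree n d H S))) \<le> measure_pmf.expectation P (w T) + \<epsilon>"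
    using ln_card \<epsilon> by linarith
  then show ?thesis
    unfolding error_eq_expectation w_def .
qed

lemma leaf_training_error:
  fixes D :: "point pmf"
  assumes uses: "uses_samples A m"
    and learns: "set_pmf D \<inter> restr_set l \<noteq> {} \<Longrightarrow> learns C (restrict_dist D l) A m \<epsilon>"
    and f: "f \<in> C"
  shows "measure_pmf.expectation (replicate_pmf N (labeled D f))
           (\<lambda>S. measure_pmf.expectation (A (restrict_sample l S))
                  (\<lambda>h. measure_pmf.prob D {x \<in> restr_set l. h x \<noteq> f x}))
         \<le> measure_pmf.prob D (restr_set l) * \<epsilon> + real m / real (Suc N)"
proof (cases "set_pmf D \<inter> restr_set l = {}")
  case True
  then have "measure_pmf.prob D {x \<in> restr_set l. h x \<noteq> f x} = 0" for h
    by (subst measure_pmf_zero_iff) (auto simp: disjnt_def)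
  moreover have "measure_pmf.prob D (restr_set l) = 0"
    using True by (simp add: measure_pmf_zero_iff disjnt_def)
  ultimately show ?thesis by simp
next
  case False
  define P where "P = labeled D f"
  define S where "S = {z :: point \<times> bool. in_restr (fst z) l}"
  define p where "p = measure_pmf.prob D (restr_set l)"
  define Dl where "Dl = restrict_dist D l"
  have preimage_S: "(\<lambda>x. (x, f x)) -` S = restr_set l"
    by (auto simp: S_def restr_set_def)
  have P_S: "measure_pmf.prob P S = p"
    by (simp add: P_def labeled_def p_def preimage_S)
  have ne: "set_pmf P \<inter> S \<noteq> {}"
    using False by (auto simp: P_def labeled_def S_def restr_set_def)
  have cond: "cond_pmf P S = labeled Dl f"
    using False unfolding P_def labeled_def Dl_def restrict_dist_def
    by (subst cond_map_pmf) (simp_all add: preimage_S)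
  have p: "p > 0"
    using False unfolding p_def by (auto intro: measure_pmf_posI)
  have leaf_err: "measure_pmf.prob D {x \<in> restr_set l. h x \<noteq> f x} = p * error h (labeled Dl f)"
    for h
    using measure_cond_pmf[OF False, of "{x. h x \<noteq> f x}"] p
    by (simp add: error_labeled Dl_def restrict_dist_def p_def Int_def)
  have "measure_pmf.expectation (replicate_pmf N P)
          (\<lambda>S'. measure_pmf.expectation (A (filter (\<lambda>z. z \<in> S) S')) (\<lambda>h. error h (cond_pmf P S)))
        \<le> \<epsilon> + measure_pmf.prob (binomial_pmf N (measure_pmf.prob P S)) {..<m}"
  proof (rule expectation_learner_filtered_sample[OF ne])
    show "0 \<le> error h (cond_pmf P S) \<and> error h (cond_pmf P S) \<le> 1" for h
      by (simp add: error_def)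
    show "m \<le> length xs \<Longrightarrow> A xs = A (take m xs)" for xs
      using uses unfolding uses_samples_def by blast
    show "measure_pmf.expectation (replicate_pmf m (cond_pmf P S) \<bind> A)
        (\<lambda>h. error h (cond_pmf P S)) \<le> \<epsilon>"
      using learns[OF False] f unfolding cond learns_def Dl_def by blast
  qed
  moreover have "restrict_sample l = filter (\<lambda>z. z \<in> S)"
    unfolding restrict_sample_def S_def by (intro ext filter_cong) auto
  ultimately have "p * measure_pmf.expectation (replicate_pmf N P)
        (\<lambda>S'. measure_pmf.expectation (A (restrict_sample l S')) (\<lambda>h. error h (labeled Dl f)))
      \<le> p * \<epsilon> + p * measure_pmf.prob (binomial_pmf N p) {..<m}"
    using p unfolding P_S cond by (simp add: distrib_left[symmetric])
  also have "\<dots> \<le> p * \<epsilon> + real m / real (Suc N)"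
    using binomial_pmf_lower_tail[of p N m] by (simp add: p_def)
  finally show ?thesis
    unfolding leaf_err P_def[symmetric] p_def[symmetric] by simp
qed

definition leaf_hypotheses :: "nat \<Rightarrow> nat \<Rightarrow> learner \<Rightarrow> sample \<Rightarrow> (restr \<Rightarrow> hyp) pmf" where
  "leaf_hypotheses n d A S = Pi_pmf (depth_restrs n d) (\<lambda>_. False) (\<lambda>\<rho>. A (restrict_sample \<rho> S))"

lemma tree_learn_eq:
  "tree_learn n A Strain Stest d =
     leaf_hypotheses n d A Strain \<bind> (\<lambda>H. return_pmf (tree_eval (best_tree n d H Stest) H))"
  by (simp add: tree_learn_def leaf_hypotheses_def)

lemma map_leaf_hypotheses:
  "\<rho> \<in> depth_restrs n d \<Longrightarrow> map_pmf (\<lambda>H. H \<rho>) (leaf_hypotheses n d A S) = A (restrict_sample \<rho> S)"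
  by (simp add: leaf_hypotheses_def Pi_pmf_component finite_depth_restrs)

lemma training_error_bound:
  assumes T: "dtree n d T" and supp: "set_pmf D \<subseteq> cube n"
    and leaves: "\<forall>l\<in>T. set_pmf D \<inter> restr_set l \<noteq> {} \<longrightarrow> restrict_dist D l \<in> \<D>"
    and uses: "uses_samples A m" and learns: "\<forall>D\<in>\<D>. learns C D A m \<epsilon>" and f: "f \<in> C"
    and \<epsilon>: "\<epsilon> > 0" and N: "real N \<ge> 2 ^ d * real m / \<epsilon>"
  shows "measure_pmf.expectation (replicate_pmf N (labeled D f)) (\<lambda>S.
           measure_pmf.expectation (leaf_hypotheses n d A S)
             (\<lambda>H. error (tree_eval T H) (labeled D f)))
         \<le> 2 * \<epsilon>"
proof -
  define err where "err l h = measure_pmf.prob D {x \<in> restr_set l. h x \<noteq> f x}" for l h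
  define E where "E S l = measure_pmf.expectation (A (restrict_sample l S)) (err l)" for S l
  have err01: "0 \<le> err l h \<and> err l h \<le> 1" for l h
    by (simp add: err_def)
  have E01: "0 \<le> E S l \<and> E S l \<le> 1" for S l
    unfolding E_def using pmf_expectation_01[of "err l"] err01 by blast
  have "measure_pmf.expectation (leaf_hypotheses n d A S)
      (\<lambda>H. error (tree_eval T H) (labeled D f)) = (\<Sum>l\<in>T. E S l)" for S
  proof -
    have "measure_pmf.expectation (leaf_hypotheses n d A S)
          (\<lambda>H. error (tree_eval T H) (labeled D f)) =
        measure_pmf.expectation (leaf_hypotheses n d A S) (\<lambda>H. \<Sum>l\<in>T. err l (H l))"
      unfolding error_labeled dtree_error_decomposition[OF T supp] err_def ..
    also have "\<dots> = (\<Sum>l\<in>T. measure_pmf.expectation (leaf_hypotheses n d A S) (\<lambda>H. err l (H l)))"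
      using err01 by (intro Bochner_Integration.integral_sum pmf_integrable_bounded[where B=1]) auto
    also have "\<dots> = (\<Sum>l\<in>T. E S l)"
    proof (intro sum.cong refl)
      fix l assume "l \<in> T"
      then have "map_pmf (\<lambda>H. H l) (leaf_hypotheses n d A S) = A (restrict_sample l S)"
        using dtree_leaves_depth_restrs[OF T] by (intro map_leaf_hypotheses) auto
      then show "measure_pmf.expectation (leaf_hypotheses n d A S) (\<lambda>H. err l (H l)) = E S l"
        unfolding E_def by (metis integral_map_pmf)
    qed
    finally show ?thesis .
  qed
  then have "measure_pmf.expectation (replicate_pmf N (labeled D f)) (\<lambda>S.
      measure_pmf.expectation (leaf_hypotheses n d A S) (\<lambda>H. error (tree_eval T H) (labeled D f))) =
      (\<Sum>l\<in>T. measure_pmf.expectation (replicate_pmf N (labeled D f)) (\<lambda>S. E S l))"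
    using E01
    by (simp, intro Bochner_Integration.integral_sum pmf_integrable_bounded[where B=1]) auto
  also have "\<dots> \<le> (\<Sum>l\<in>T. measure_pmf.prob D (restr_set l) * \<epsilon> + real m / real (Suc N))"
    unfolding E_def err_def using leaves learns
    by (intro sum_mono leaf_training_error[OF uses _ f]) auto
  also have "\<dots> = \<epsilon> * (\<Sum>l\<in>T. measure_pmf.prob D (restr_set l)) +
      real (card T) * real m / real (Suc N)"
    by (simp add: sum.distrib sum_distrib_left mult.commute)
  also have "\<dots> \<le> \<epsilon> * 1 + 2 ^ d * real m / real (Suc N)"
    using dtree_sum_leaf_measure_le[OF T, of D] dtree_card_leaves[OF T] \<epsilon>
    by (intro add_mono mult_left_mono divide_right_mono mult_right_mono)
      (auto simp flip: of_nat_power)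
  also have "\<dots> \<le> 2 * \<epsilon>"
    using N \<epsilon> by (simp add: field_simps)
  finally show ?thesis .
qed

lemma expectation_tree_learn:
  "measure_pmf.expectation
     (replicate_pmf mtrain P \<bind> (\<lambda>Strain.
      replicate_pmf mtest P \<bind> (\<lambda>Stest. tree_learn n A Strain Stest d)))
     (\<lambda>H. error H P) =
   measure_pmf.expectation (replicate_pmf mtrain P) (\<lambda>Strain.
     measure_pmf.expectation (leaf_hypotheses n d A Strain) (\<lambda>H.
       measure_pmf.expectation (replicate_pmf mtest P) (\<lambda>Stest.
         error (tree_eval (best_tree n d H Stest) H) P)))"
proof -
  have error_bound: "\<bar>error h Q\<bar> \<le> 1" for h Q
    by (simp add: error_def)
  have "replicate_pmf mtest P \<bind> (\<lambda>Stest. tree_learn n A Strain Stest d) =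
        leaf_hypotheses n d A Strain \<bind>
          (\<lambda>H. map_pmf (\<lambda>Stest. tree_eval (best_tree n d H Stest) H) (replicate_pmf mtest P))"
    for Strain unfolding tree_learn_eq map_pmf_def by (rule bind_commute_pmf)
  then show ?thesis
    using error_bound
    by (simp add: pmf_expectation_bind_bounded[where B=1] pmf_expectation_01 abs_le_iff)
qed

lemma tree_learn_expected_error:
  assumes supp: "set_pmf Dstar \<subseteq> cube n" and dec: "has_decomposition n \<D> Dstar d"
    and uses: "uses_samples A m" and learns: "\<forall>D\<in>\<D>. learns C D A m \<epsilon>"
    and \<epsilon>: "\<epsilon> > 0" and f: "f \<in> C"
    and mtrain: "real mtrain \<ge> 2 ^ d * real m / \<epsilon>"
    and mtest: "real mtest \<ge> 2 ^ d * ln (real n) / \<epsilon> ^ 2"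
  shows "measure_pmf.expectation
           (replicate_pmf mtrain (labeled Dstar f) \<bind> (\<lambda>Strain.
            replicate_pmf mtest (labeled Dstar f) \<bind> (\<lambda>Stest.
            tree_learn n A Strain Stest d)))
           (\<lambda>H. error H (labeled Dstar f)) \<le> 3 * \<epsilon>"
proof -
  obtain T where T: "dtree n d T"
    and leaves: "\<forall>l\<in>T. set_pmf Dstar \<inter> restr_set l \<noteq> {} \<longrightarrow> restrict_dist Dstar l \<in> \<D>"
    using dec unfolding has_decomposition_def by blast
  let ?P = "labeled Dstar f"
  have error01: "0 \<le> error h Q \<and> error h Q \<le> 1" for h Q
    by (simp add: error_def)
  have "measure_pmf.expectation (leaf_hypotheses n d A Strain) (\<lambda>H.
          measure_pmf.expectation (replicate_pmf mtest ?P) (\<lambda>Stest.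
            error (tree_eval (best_tree n d H Stest) H) ?P))
        \<le> measure_pmf.expectation (leaf_hypotheses n d A Strain) (\<lambda>H. error (tree_eval T H) ?P) + \<epsilon>"
    for Strain
    by (rule pmf_expectation_le_add_const)
      (use best_tree_expected_error[OF T \<epsilon> mtest] error01 in \<open>auto simp: pmf_expectation_01\<close>)
  then have "measure_pmf.expectation (replicate_pmf mtrain ?P) (\<lambda>Strain.
          measure_pmf.expectation (leaf_hypotheses n d A Strain) (\<lambda>H.
            measure_pmf.expectation (replicate_pmf mtest ?P) (\<lambda>Stest.
              error (tree_eval (best_tree n d H Stest) H) ?P)))
        \<le> measure_pmf.expectation (replicate_pmf mtrain ?P) (\<lambda>Strain.
          measure_pmf.expectation (leaf_hypotheses n d A Strain)
            (\<lambda>H. error (tree_eval T H) ?P)) + \<epsilon>"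
    by (rule pmf_expectation_le_add_const) (use error01 in \<open>auto simp: pmf_expectation_01\<close>)
  also have "\<dots> \<le> 2 * \<epsilon> + \<epsilon>"
    using training_error_bound[OF T supp leaves uses learns f \<epsilon> mtrain] by simp
  finally show ?thesis
    by (simp add: expectation_tree_learn)
qed

theorem lemma6p4:
  "\<exists>c1>0. \<exists>c2>0. \<forall>(n::nat) (C::hyp set) (\<D>::point pmf set) (Dstar::point pmf) (d::nat)
      (A::learner) (m::nat) (\<epsilon>::real) (f::hyp) (mtrain::nat) (mtest::nat).
     (\<forall>D\<in>\<D>. set_pmf D \<subseteq> cube n) \<and> closed_under_restrictions n \<D> \<and>
     set_pmf Dstar \<subseteq> cube n \<and> has_decomposition n \<D> Dstar d \<and>
     uses_samples A m \<and> (\<forall>D\<in>\<D>. learns C D A m \<epsilon>) \<and> \<epsilon> > 0 \<and> f \<in> C \<and>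
     real mtrain \<ge> c1 * 2 ^ d * real m / \<epsilon> \<and>
     real mtest \<ge> c2 * 2 ^ d * ln (real n) / \<epsilon> ^ 2
     \<longrightarrow> measure_pmf.expectation
           (replicate_pmf mtrain (labeled Dstar f) \<bind> (\<lambda>Strain.
            replicate_pmf mtest (labeled Dstar f) \<bind> (\<lambda>Stest.
            tree_learn n A Strain Stest d)))
           (\<lambda>H. error H (labeled Dstar f)) \<le> 4 * \<epsilon>"
proof (intro exI[of _ 1] conjI allI impI, goal_cases)
  case (3 n C \<D> Dstar d A m \<epsilon> f mtrain mtest)
  then show ?case
    using tree_learn_expected_error[of Dstar n \<D> d A m C \<epsilon> f mtrain mtest] by auto
qed simp_all

end
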